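(* Let $I$ be a semigroup (or a monoid), let $(A,\alpha)$ and $(B,\beta)$ be semi-invertible finite $I$-sets, and let $f:A\to B$ be a bijective $I$-equivariant function. Then the inverse $f^{-1}:B\to A$ is $I$-equivariant.
   Context: For a set $X$, $\mathrm{End}_l(X)$ denotes self-maps of $X$ written on the left with product $f\circ g$ ($g$ first); $\mathrm{End}_r(X)$ denotes self-maps written on the right, $x\mapsto(x)f$, with $(x)(fg)=((x)f)g$. An $I$-set is a set $X$ with a pair $\xi=(\xi_l,\xi_r)$ of semigroup (resp. monoid) homomorphisms $\xi_l:I\to\mathrm{End}_l(X)$, $\xi_r:I\to\mathrm{End}_r(X)$ with $(\xi_l(i)(x))\xi_r(j)=\xi_l(i)((x)\xi_r(j))$ for all $i,j,x$. A function $f:X\to Y$ between $I$-sets $(X,\xi)$, $(Y,\eta)$ is $I$-equivariant if $(f(\xi_l(i)(x)))\eta_r(i)=\eta_l(i)(f((x)\xi_r(i)))$ for all $i\in I$, $x\in X$. An $I$-set $(X,\xi)$ is semi-invertible if for every $i\in I$, at least one of $\xi_l(i)$, $\xi_r(i)$ is a bijection of $X$. *)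

theory Defs
  imports Main
begin

text \<open>An I-set is a carrier set X together with a left action xl (xl i x = xi_l(i)(x))
and a right action xr (xr i x = (x)xi_r(i)), both mapping X into X.
xi_l is a semigroup homomorphism into End_l(X): xi_l(ij) = xi_l(i) o xi_l(j);
xi_r is a semigroup homomorphism into End_r(X): (x)xi_r(ij) = ((x)xi_r(i))xi_r(j).\<close>

definition I_set :: "'a set \<Rightarrow> ('i::semigroup_mult \<Rightarrow> 'a \<Rightarrow> 'a) \<Rightarrow> ('i \<Rightarrow> 'a \<Rightarrow> 'a) \<Rightarrow> bool" where
  "I_set X xl xr \<longleftrightarrow>
     (\<forall>i. \<forall>x\<in>X. xl i x \<in> X) \<and>
     (\<forall>i. \<forall>x\<in>X. xr i x \<in> X) \<and>
     (\<forall>i j. \<forall>x\<in>X. xl (i * j) x = xl i (xl j x)) \<and>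
     (\<forall>i j. \<forall>x\<in>X. xr (i * j) x = xr j (xr i x)) \<and>
     (\<forall>i j. \<forall>x\<in>X. xr j (xl i x) = xl i (xr j x))"

definition semi_invertible :: "'a set \<Rightarrow> ('i \<Rightarrow> 'a \<Rightarrow> 'a) \<Rightarrow> ('i \<Rightarrow> 'a \<Rightarrow> 'a) \<Rightarrow> bool" where
  "semi_invertible X xl xr \<longleftrightarrow> (\<forall>i. bij_betw (xl i) X X \<or> bij_betw (xr i) X X)"

definition I_equivariant ::
  "'a set \<Rightarrow> ('i \<Rightarrow> 'a \<Rightarrow> 'a) \<Rightarrow> ('i \<Rightarrow> 'a \<Rightarrow> 'a) \<Rightarrow>
   ('i \<Rightarrow> 'b \<Rightarrow> 'b) \<Rightarrow> ('i \<Rightarrow> 'b \<Rightarrow> 'b) \<Rightarrow> ('a \<Rightarrow> 'b) \<Rightarrow> bool" where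
  "I_equivariant X xl xr yl yr f \<longleftrightarrow>
     (\<forall>i. \<forall>x\<in>X. yr i (f (xl i x)) = yl i (f (xr i x)))"

end

theory Submission
  imports Defs
begin

text \<open>Fix i \<in> I and transport the two actions of i on B to A along f, obtaining maps q, q' on A.
Writing p, p' for the actions of i on A, equivariance of f says q' \<circ> p = q \<circ> p', and equivariance
of f\<inverse> says p' \<circ> q = p \<circ> q'. Assume p is bijective (the other case is symmetric) and put
c = p' \<circ> p\<inverse>, so q' = q \<circ> c. Then q is injective: either it is bijective, or q' is, in which case
q is onto the finite set A. Since q commutes with q' = q \<circ> c, injectivity gives q \<circ> c = c \<circ> q, and
p \<circ> q' = p \<circ> c \<circ> q = p' \<circ> q because p commutes with p'.\<close>

lemma inj_on_of_bij_factor: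
  assumes "finite X" and "bij_betw q' X X"
    and "\<And>x. x \<in> X \<Longrightarrow> c x \<in> X" and "\<And>x. x \<in> X \<Longrightarrow> q' x = q (c x)"
  shows "inj_on q X"
proof -
  have "X = q' ` X" using \<open>bij_betw q' X X\<close> by (simp add: bij_betw_def)
  also have "\<dots> \<subseteq> q ` X" using assms(3,4) by auto
  finally show ?thesis using \<open>finite X\<close> finite_surj_inj by blast
qed

lemma commute_with_factor:
  assumes "inj_on q X" and "\<And>x. x \<in> X \<Longrightarrow> q x \<in> X" and "\<And>x. x \<in> X \<Longrightarrow> c x \<in> X"
    and "\<And>x. x \<in> X \<Longrightarrow> q' x = q (c x)" and "\<And>x. x \<in> X \<Longrightarrow> q (q' x) = q' (q x)"
    and "x \<in> X"
  shows "q (c x) = c (q x)"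
proof -
  have "q (q (c x)) = q (q' x)" using assms(4,6) by simp
  also have "\<dots> = q' (q x)" using assms(5,6) by simp
  also have "\<dots> = q (c (q x))" using assms(2,4,6) by simp
  finally show ?thesis using assms(1-3,6) by (meson inj_onD)
qed

lemma cross_identity_flip_of_bij:
  assumes "finite X"
    and p'X: "\<And>x. x \<in> X \<Longrightarrow> p' x \<in> X" and qX: "\<And>x. x \<in> X \<Longrightarrow> q x \<in> X"
    and pp': "\<And>x. x \<in> X \<Longrightarrow> p (p' x) = p' (p x)"
    and qq': "\<And>x. x \<in> X \<Longrightarrow> q (q' x) = q' (q x)"
    and cross: "\<And>x. x \<in> X \<Longrightarrow> q' (p x) = q (p' x)"
    and "bij_betw p X X" and q_bij: "bij_betw q X X \<or> bij_betw q' X X"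
    and "w \<in> X"
  shows "p' (q w) = p (q' w)"
proof -
  define c where "c x = p' (inv_into X p x)" for x
  have invX: "\<And>x. x \<in> X \<Longrightarrow> inv_into X p x \<in> X"
    using \<open>bij_betw p X X\<close> by (metis bij_betw_def inv_into_into)
  have p_inv: "\<And>x. x \<in> X \<Longrightarrow> p (inv_into X p x) = x"
    using \<open>bij_betw p X X\<close> by (simp add: bij_betw_inv_into_right)
  have cX: "\<And>x. x \<in> X \<Longrightarrow> c x \<in> X" using invX p'X c_def by auto
  have q'_factor: "q' x = q (c x)" if "x \<in> X" for x
    using cross[OF invX[OF that]] p_inv[OF that] by (simp add: c_def)
  have q_inj: "inj_on q X"
    using q_bij inj_on_of_bij_factor[of X q' c q, OF \<open>finite X\<close> _ cX q'_factor]
    by (auto simp: bij_betw_def)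
  have qc: "q (c x) = c (q x)" if "x \<in> X" for x
    using commute_with_factor[of q X c q' x, OF q_inj qX cX q'_factor qq' that] .
  have "p (q' w) = p (c (q w))" using q'_factor qc \<open>w \<in> X\<close> by simp
  also have "\<dots> = p' (p (inv_into X p (q w)))" using pp' invX qX \<open>w \<in> X\<close> by (simp add: c_def)
  also have "\<dots> = p' (q w)" using p_inv qX \<open>w \<in> X\<close> by simp
  finally show ?thesis by simp
qed

lemma cross_identity_flip:
  assumes "finite X"
    and "\<And>x. x \<in> X \<Longrightarrow> p x \<in> X" and "\<And>x. x \<in> X \<Longrightarrow> p' x \<in> X"
    and "\<And>x. x \<in> X \<Longrightarrow> q x \<in> X" and "\<And>x. x \<in> X \<Longrightarrow> q' x \<in> X"
    and "\<And>x. x \<in> X \<Longrightarrow> p (p' x) = p' (p x)"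
    and "\<And>x. x \<in> X \<Longrightarrow> q (q' x) = q' (q x)"
    and "\<And>x. x \<in> X \<Longrightarrow> q' (p x) = q (p' x)"
    and "bij_betw p X X \<or> bij_betw p' X X" and "bij_betw q X X \<or> bij_betw q' X X"
    and "w \<in> X"
  shows "p' (q w) = p (q' w)"
proof (cases "bij_betw p X X")
  case True
  then show ?thesis
    by (intro cross_identity_flip_of_bij[of X p' q p q' w]) (use assms in auto)
next
  case False
  then have "bij_betw p' X X" using assms(9) by simp
  have "p (q' w) = p' (q w)"
    by (intro cross_identity_flip_of_bij[of X p q' p' q w]) (use assms \<open>bij_betw p' X X\<close> in auto)
  then show ?thesis ..
qed

lemma bij_betw_conjugate:
  assumes "bij_betw f A B" and "bij_betw h B B"
  shows "bij_betw (\<lambda>x. inv_into A f (h (f x))) A A"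
proof -
  have "bij_betw (inv_into A f \<circ> (h \<circ> f)) A A"
    using assms bij_betw_inv_into bij_betw_trans by metis
  then show ?thesis by (simp add: comp_def)
qed

theorem mainTheorem5:
  fixes A :: "'a set" and B :: "'b set"
    and al ar :: "'i::semigroup_mult \<Rightarrow> 'a \<Rightarrow> 'a"
    and bl br :: "'i \<Rightarrow> 'b \<Rightarrow> 'b"
    and f :: "'a \<Rightarrow> 'b"
  assumes "I_set A al ar" and "I_set B bl br"
    and "finite A" and "finite B"
    and "semi_invertible A al ar" and "semi_invertible B bl br"
    and "bij_betw f A B"
    and "I_equivariant A al ar bl br f"
  shows "I_equivariant B bl br al ar (inv_into A f)"
  unfolding I_equivariant_def
proof (intro allI ballI)
  fix i y assume "y \<in> B"
  let ?g = "inv_into A f"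
  define q where "q x = ?g (bl i (f x))" for x
  define q' where "q' x = ?g (br i (f x))" for x
  have f_into: "\<And>x. x \<in> A \<Longrightarrow> f x \<in> B"
    using assms(7) by (meson bij_betwE)
  have g_into: "\<And>y. y \<in> B \<Longrightarrow> ?g y \<in> A"
    using assms(7) by (meson bij_betwE bij_betw_inv_into)
  have fg: "\<And>y. y \<in> B \<Longrightarrow> f (?g y) = y"
    using assms(7) by (simp add: bij_betw_inv_into_right)
  have "ar i (q (?g y)) = al i (q' (?g y))"
  proof (rule cross_identity_flip[of A "al i" "ar i" q q', OF \<open>finite A\<close>])
    show "bij_betw (al i) A A \<or> bij_betw (ar i) A A"
      using assms(5) by (simp add: semi_invertible_def)
    show "bij_betw q A A \<or> bij_betw q' A A"
      using assms(6) bij_betw_conjugate[OF assms(7)]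
      unfolding semi_invertible_def q_def[abs_def] q'_def[abs_def] by blast
    show "\<And>x. x \<in> A \<Longrightarrow> q' (al i x) = q (ar i x)"
      using assms(8) by (simp add: I_equivariant_def q_def q'_def)
  qed (use assms(1,2) f_into g_into fg \<open>y \<in> B\<close> in \<open>auto simp: I_set_def q_def q'_def\<close>)
  then show "ar i (?g (bl i y)) = al i (?g (br i y))"
    using fg \<open>y \<in> B\<close> by (simp add: q_def q'_def)
qed

end
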